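(* Fix $p\in(0,1)$ and $B>0$, and suppose $Y_{a,b}\in[0,B]$ for all pairs. Under the Alternating Path Randomized Design, for a component $\mathcal{P}_s$ of length $k=k(s)$: if $\mathcal{P}_s$ is a path, \[\max_{Y_e\in[0,B]\ \forall e\in\mathcal{P}_s}\mathrm{Var}(\hat\Gamma_s)=\Big(\frac1p+\frac2{1-p}\Big)B^2k+\frac{2B^2(p^{k}-1)}{(1-p)^2};\] if $\mathcal{P}_s$ is a cycle, \[\max_{Y_e\in[0,B]\ \forall e\in\mathcal{P}_s}\mathrm{Var}(\hat\Gamma_s)=\Big(\frac1p+\frac2{1-p}\Big)B^2(k-1)+\frac{2B^2(p^{k-1}-1)}{(1-p)^2}+\frac{B^2\big(4+2p-p^2-p^3-p^{k-2}(2+p+p^2)\big)}{(1-p)(1+p^{k-1})}.\] Moreover, for both paths and cycles, \[\lim_{k\to\infty}\frac{1}{k}\max_{Y_e\in[0,B]\ \forall e\in\mathcal{P}_s}\mathrm{Var}(\hat\Gamma_s)=\frac{B^2(1+p)}{p(1-p)}.\]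
   Context: Setting: $2N$ agents; $\mathbb{M}^t,\mathbb{M}^c$ are one-to-one matchings (sets of unordered pairs of distinct agents, each agent in at most one pair); each pair $(a,b)$ has a fixed real potential outcome $Y_{a,b}$. The disagreement set $\triangle\mathbb{M}^{(t,c)}=(\mathbb{M}^t\cup\mathbb{M}^c)\setminus(\mathbb{M}^t\cap\mathbb{M}^c)$, viewed as a graph, has connected components, each an alternating path or cycle: a sequence $(v_{s,1},\dots,v_{s,k(s)+1})$ whose consecutive pairs $e_{s,j}=(v_{s,j},v_{s,j+1})$, $j=1,\dots,k(s)$, are its edges, alternating between $\triangle\mathbb{M}^{(t,c)}_t=\triangle\mathbb{M}^{(t,c)}\cap\mathbb{M}^t$ and $\triangle\mathbb{M}^{(t,c)}_c=\triangle\mathbb{M}^{(t,c)}\cap\mathbb{M}^c$; a cycle if $v_{s,1}=v_{s,k(s)+1}$, a path otherwise; $k(s)$ is its length. Alternating Path Randomized Design with parameter $p$: indicators $W_{s,j}\in\{0,1\}$, independent across components; within $\mathcal{P}_s$, $\mathbb{P}(W_{s,1}=1)=p/(1+p)$; for $2\le j\le k(s)$ (path) or $2\le j\le k(s)-1$ (cycle), conditionally on $W_{s,1},\dots,W_{s,j-1}$, $W_{s,j}=1$ with probability $p$ if $W_{s,j-1}=0$ and $W_{s,j}=0$ if $W_{s,j-1}=1$; for a cycle, $W_{s,k(s)}=1$ iff $W_{s,1}=W_{s,k(s)-1}=0$. $\hat\Gamma_s=\sum_{j:\,e_{s,j}\in\triangle\mathbb{M}^{(t,c)}_t}\frac{W_{s,j}Y_{e_{s,j}}}{\mathbb{P}(W_{s,j}=1)}-\sum_{j:\,e_{s,j}\in\triangle\mathbb{M}^{(t,c)}_c}\frac{W_{s,j}Y_{e_{s,j}}}{\mathbb{P}(W_{s,j}=1)}$.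 The limit statement is over components (paths, respectively cycles) whose length $k$ tends to infinity, with the maxima given by the formulas above. *)

theory Defs
  imports Complex_Main "HOL-Library.FuncSet"
begin

text \<open>One component P_s of length k, edges e_1..e_k indexed 1..k.
 Assignment outcomes: W : {1..k} -> bool (extensional functions).\<close>

definition outcomes :: "nat \<Rightarrow> (nat \<Rightarrow> bool) set" where
  "outcomes k = {1..k} \<rightarrow>\<^sub>E (UNIV :: bool set)"

definition init_prob :: "real \<Rightarrow> bool \<Rightarrow> real" where
  "init_prob p b = (if b then p / (1 + p) else 1 / (1 + p))"

definition trans_prob :: "real \<Rightarrow> bool \<Rightarrow> bool \<Rightarrow> real" where
  "trans_prob p a b = (if a then (if b then 0 else 1) else (if b then p else 1 - p))"

definition path_weight :: "real \<Rightarrow> nat \<Rightarrow> (nat \<Rightarrow> bool) \<Rightarrow> real" where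
  "path_weight p k w = init_prob p (w 1) * (\<Prod>j\<in>{2..k}. trans_prob p (w (j - 1)) (w j))"

definition cycle_weight :: "real \<Rightarrow> nat \<Rightarrow> (nat \<Rightarrow> bool) \<Rightarrow> real" where
  "cycle_weight p k w = init_prob p (w 1) * (\<Prod>j\<in>{2..k - 1}. trans_prob p (w (j - 1)) (w j))
     * (if w k = (\<not> w 1 \<and> \<not> w (k - 1)) then 1 else 0)"

definition marg :: "((nat \<Rightarrow> bool) \<Rightarrow> real) \<Rightarrow> nat \<Rightarrow> nat \<Rightarrow> real" where
  "marg P k j = (\<Sum>w\<in>outcomes k. if w j then P w else 0)"

text \<open>Sign of edge e_j: +1 if e_j is in the treatment matching, -1 if in the control one.
 Edges alternate; first_t says whether e_1 is a treatment edge.\<close>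
definition edge_sign :: "bool \<Rightarrow> nat \<Rightarrow> real" where
  "edge_sign first_t j = (if odd j = first_t then 1 else -1)"

definition est :: "((nat \<Rightarrow> bool) \<Rightarrow> real) \<Rightarrow> nat \<Rightarrow> bool \<Rightarrow> (nat \<Rightarrow> real) \<Rightarrow> (nat \<Rightarrow> bool) \<Rightarrow> real" where
  "est P k first_t Y w = (\<Sum>j\<in>{1..k}. edge_sign first_t j * (if w j then Y j / marg P k j else 0))"

definition variance_under :: "((nat \<Rightarrow> bool) \<Rightarrow> real) \<Rightarrow> nat \<Rightarrow> ((nat \<Rightarrow> bool) \<Rightarrow> real) \<Rightarrow> real" where
  "variance_under P k f = (\<Sum>w\<in>outcomes k. P w * (f w)\<^sup>2) - (\<Sum>w\<in>outcomes k. P w * f w)\<^sup>2"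

definition path_var :: "real \<Rightarrow> nat \<Rightarrow> bool \<Rightarrow> (nat \<Rightarrow> real) \<Rightarrow> real" where
  "path_var p k first_t Y = variance_under (path_weight p k) k (est (path_weight p k) k first_t Y)"

definition cycle_var :: "real \<Rightarrow> nat \<Rightarrow> bool \<Rightarrow> (nat \<Rightarrow> real) \<Rightarrow> real" where
  "cycle_var p k first_t Y = variance_under (cycle_weight p k) k (est (cycle_weight p k) k first_t Y)"

definition outcome_box :: "nat \<Rightarrow> real \<Rightarrow> (nat \<Rightarrow> real) set" where
  "outcome_box k B = {Y. \<forall>j\<in>{1..k}. 0 \<le> Y j \<and> Y j \<le> B}"

definition path_maxvar :: "real \<Rightarrow> real \<Rightarrow> nat \<Rightarrow> bool \<Rightarrow> real" where
  "path_maxvar p B k first_t = (SUP Y\<in>outcome_box k B. path_var p k first_t Y)"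

definition cycle_maxvar :: "real \<Rightarrow> real \<Rightarrow> nat \<Rightarrow> bool \<Rightarrow> real" where
  "cycle_maxvar p B k first_t = (SUP Y\<in>outcome_box k B. cycle_var p k first_t Y)"

end

theory Submission
  imports Defs
begin

text \<open>The estimator is linear in \<open>Y\<close>, so its variance is a quadratic form
  \<open>\<Sum>i j. Y i * Y j * K i j\<close> with \<open>K i j = \<plusminus>Cov(W i, W j) / (P(W i) * P(W j))\<close>.
  Along a path, \<open>W\<close> is a two-state Markov chain with stationary law \<open>P(W j) = p / (1 + p)\<close> and
  second eigenvalue \<open>-p\<close>, so \<open>Cov(W i, W j)\<close> is proportional to \<open>(-p) ^ |i - j|\<close>; the alternating
  signs of the edges cancel the sign and \<open>K i j = p ^ |i - j| / p \<ge> 0\<close>.  A cycle of even length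
  \<open>n + 1\<close> is the path of length \<open>n\<close> with the last indicator determined by the first and the
  \<open>n\<close>-th, and its extra kernel entries are nonnegative as well.  Hence the variance is maximal at
  \<open>Y = B\<close>, where it equals \<open>B\<^sup>2 * \<Sum>i j. K i j\<close>, a geometric sum; it grows linearly in the
  length, which gives the limits.\<close>

section \<open>The forward recursion of the alternating chain\<close>

lemma finite_outcomes [simp]: "finite (outcomes n)"
  unfolding outcomes_def by (simp add: finite_PiE)

lemma outcomes_0: "outcomes 0 = {\<lambda>_. undefined}"
  unfolding outcomes_def by simp

lemma sum_outcomes_Suc:
  "(\<Sum>w\<in>outcomes (Suc n). h w) = (\<Sum>w\<in>outcomes n. h (w(Suc n := True)) + h (w(Suc n := False)))"
proof -
  let ?ext = "\<lambda>(b, w). w(Suc n := b)"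
  have fresh: "Suc n \<notin> {1..n}" by simp
  have "{1..Suc n} = insert (Suc n) {1..n}" by auto
  then have "outcomes (Suc n) = ?ext ` (UNIV \<times> outcomes n)"
    unfolding outcomes_def by (simp add: PiE_insert_eq)
  moreover have "inj_on ?ext (UNIV \<times> outcomes n)"
    using inj_combinator[OF fresh, of "\<lambda>_. UNIV :: bool set"] unfolding outcomes_def by simp
  ultimately have "(\<Sum>w\<in>outcomes (Suc n). h w) = (\<Sum>(b, w)\<in>UNIV \<times> outcomes n. h (w(Suc n := b)))"
    by (simp add: sum.reindex split_def)
  also have "\<dots> = (\<Sum>w\<in>outcomes n. h (w(Suc n := True)) + h (w(Suc n := False)))"
    by (simp add: sum.cartesian_product[symmetric] UNIV_bool sum.distrib add.commute)
  finally show ?thesis .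
qed

lemma path_weight_Suc:
  "1 \<le> n \<Longrightarrow> path_weight p (Suc n) w = path_weight p n w * trans_prob p (w n) (w (Suc n))"
  unfolding path_weight_def by simp

lemma path_weight_cong:
  "(\<And>j. 1 \<le> j \<Longrightarrow> j \<le> n \<Longrightarrow> w j = v j) \<Longrightarrow> 1 \<le> n \<Longrightarrow> path_weight p n w = path_weight p n v"
  unfolding path_weight_def by (intro arg_cong2[where f = "(*)"] prod.cong) auto

text \<open>\<open>forward p g j b\<close> is the expectation of \<open>\<Prod>l\<in>{1..j}. g l (W l)\<close> restricted to \<open>W j = b\<close>.
  Index \<open>0\<close> stands for a fictitious predecessor of \<open>W 1\<close>: since \<open>init_prob p\<close> is stationary
  for \<open>trans_prob p\<close>, one chain step from it reproduces the law of \<open>W 1\<close>.\<close>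

fun forward :: "real \<Rightarrow> (nat \<Rightarrow> bool \<Rightarrow> real) \<Rightarrow> nat \<Rightarrow> bool \<Rightarrow> real" where
  "forward p g 0 b = init_prob p b"
| "forward p g (Suc j) b =
     g (Suc j) b * (forward p g j True * trans_prob p True b + forward p g j False * trans_prob p False b)"

lemma forward_Suc_True: "forward p g (Suc j) True = g (Suc j) True * (p * forward p g j False)"
  by (simp add: trans_prob_def)

lemma forward_Suc_False:
  "forward p g (Suc j) False = g (Suc j) False * (forward p g j True + (1 - p) * forward p g j False)"
  by (simp add: trans_prob_def)

declare forward.simps(2) [simp del]

lemma sum_path_weight_prod_eq_forward:
  assumes "1 \<le> n" "0 \<le> p"
  shows "(\<Sum>w\<in>outcomes n. if w n = b then path_weight p n w * (\<Prod>l\<in>{1..n}. g l (w l)) else 0)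
    = forward p g n b"
  using assms(1)
proof (induction n arbitrary: b rule: dec_induct)
  case base
  have "1 + p \<noteq> 0" using assms(2) by linarith
  then show ?case
    by (cases b) (simp_all add: sum_outcomes_Suc[of _ 0] outcomes_0 path_weight_def init_prob_def
        forward_Suc_True forward_Suc_False field_simps)
next
  case (step n)
  let ?G = "\<lambda>w. path_weight p n w * (\<Prod>l\<in>{1..n}. g l (w l))"
  have extend: "path_weight p (Suc n) (w(Suc n := c)) * (\<Prod>l\<in>{1..Suc n}. g l ((w(Suc n := c)) l))
      = ?G w * trans_prob p (w n) c * g (Suc n) c" for w c
  proof -
    have "path_weight p n (w(Suc n := c)) = path_weight p n w"
      by (rule path_weight_cong) (use step in auto)
    moreover have "(\<Prod>l\<in>{1..n}. g l ((w(Suc n := c)) l)) = (\<Prod>l\<in>{1..n}. g l (w l))"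
      by (rule prod.cong) auto
    ultimately show ?thesis using step(1) by (simp add: path_weight_Suc)
  qed
  have "(\<Sum>w\<in>outcomes (Suc n). if w (Suc n) = b then path_weight p (Suc n) w * (\<Prod>l\<in>{1..Suc n}. g l (w l)) else 0)
      = (\<Sum>w\<in>outcomes n. ?G w * trans_prob p (w n) b * g (Suc n) b)"
    unfolding sum_outcomes_Suc by (intro sum.cong refl) (cases b; simp only: extend fun_upd_same; simp)
  also have "\<dots> = (\<Sum>w\<in>outcomes n. (if w n = True then ?G w else 0) * (trans_prob p True b * g (Suc n) b)
      + (if w n = False then ?G w else 0) * (trans_prob p False b * g (Suc n) b))"
    by (intro sum.cong refl) auto
  also have "\<dots> = forward p g n True * (trans_prob p True b * g (Suc n) b)
      + forward p g n False * (trans_prob p False b * g (Suc n) b)"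
    by (simp add: sum.distrib sum_distrib_right[symmetric] step.IH[of True, simplified]
        step.IH[of False, simplified])
  finally show ?case by (simp add: forward.simps(2) algebra_simps)
qed

definition stationary_prob :: "real \<Rightarrow> real" where
  "stationary_prob p = p / (1 + p)"

lemma one_minus_stationary_prob: "0 \<le> p \<Longrightarrow> 1 - stationary_prob p = 1 / (1 + p)"
  by (simp add: stationary_prob_def field_simps)

lemma stationary_prob_balance: "0 \<le> p \<Longrightarrow> p * (1 - stationary_prob p) = stationary_prob p"
  by (simp add: stationary_prob_def field_simps)

text \<open>With \<open>s = 1 / (1 + p)\<close>, identities in \<open>p\<close> and \<open>stationary_prob p\<close> become rational
  identities in the single variable \<open>s\<close>, which \<open>field_simps\<close> decides.\<close>

lemma stationary_prob_param:
  assumes "0 \<le> p"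
  obtains s where "s \<noteq> 0" "p = (1 - s) / s" "stationary_prob p = 1 - s"
proof
  show "1 / (1 + p) \<noteq> 0" "p = (1 - 1 / (1 + p)) / (1 / (1 + p))" "stationary_prob p = 1 - 1 / (1 + p)"
    using assms by (simp_all add: stationary_prob_def field_simps)
qed

text \<open>The chain has eigenvalues \<open>1\<close> and \<open>-p\<close>: along a stretch without constraints the total mass
  is kept and its deviation from the stationary split is multiplied by \<open>-p\<close> at every step.\<close>

lemma forward_relax:
  assumes "a \<le> b" "\<And>j. a < j \<Longrightarrow> j \<le> b \<Longrightarrow> g j = (\<lambda>_. 1)" "0 \<le> p"
  defines "S \<equiv> forward p g a True + forward p g a False"
  defines "d \<equiv> forward p g a True - S * stationary_prob p"
  shows "forward p g b True = S * stationary_prob p + (-p) ^ (b - a) * d"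
    and "forward p g b False = S * (1 - stationary_prob p) - (-p) ^ (b - a) * d"
proof -
  have "forward p g b True = S * stationary_prob p + (-p) ^ (b - a) * d
    \<and> forward p g b False = S * (1 - stationary_prob p) - (-p) ^ (b - a) * d"
    using assms(1,2)
  proof (induction b rule: dec_induct)
    case base
    show ?case by (simp add: S_def d_def algebra_simps)
  next
    case (step c)
    let ?E = "(-p) ^ (c - a)"
    have T: "forward p g c True = S * stationary_prob p + ?E * d"
      and F: "forward p g c False = S * (1 - stationary_prob p) - ?E * d"
      using step by auto
    have g: "g (Suc c) = (\<lambda>_. 1)" using step by auto
    have E: "(-p) ^ (Suc c - a) = - p * ?E"
      using step(1) by (simp add: Suc_diff_le)
    have bal: "p * (1 - stationary_prob p) = stationary_prob p"
      using assms(3) by (rule stationary_prob_balance)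
    have "forward p g (Suc c) True = S * (p * (1 - stationary_prob p)) - p * ?E * d"
      unfolding forward_Suc_True g F by (simp add: algebra_simps)
    moreover have "forward p g (Suc c) False = S - (S * (p * (1 - stationary_prob p)) - p * ?E * d)"
      unfolding forward_Suc_False g T F by (simp add: algebra_simps)
    ultimately show ?case unfolding bal E by (simp add: algebra_simps)
  qed
  then show "forward p g b True = S * stationary_prob p + (-p) ^ (b - a) * d"
    and "forward p g b False = S * (1 - stationary_prob p) - (-p) ^ (b - a) * d"
    by auto
qed

section \<open>Probabilities of partial assignments\<close>

definition agrees :: "(nat \<rightharpoonup> bool) \<Rightarrow> (nat \<Rightarrow> bool) \<Rightarrow> bool" where
  "agrees c w \<longleftrightarrow> (\<forall>l\<in>dom c. c l = Some (w l))"

definition pin_factor :: "(nat \<rightharpoonup> bool) \<Rightarrow> nat \<Rightarrow> bool \<Rightarrow> real" where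
  "pin_factor c l b = (if c l = None \<or> c l = Some b then 1 else 0)"

definition path_prob :: "real \<Rightarrow> nat \<Rightarrow> (nat \<rightharpoonup> bool) \<Rightarrow> real" where
  "path_prob p n c = (\<Sum>w\<in>outcomes n. if agrees c w then path_weight p n w else 0)"

lemma prod_pin_factor:
  assumes "dom c \<subseteq> {1..n}"
  shows "(\<Prod>l\<in>{1..n}. pin_factor c l (w l)) = (if agrees c w then 1 else 0)"
proof (cases "agrees c w")
  case True
  then show ?thesis by (auto simp: agrees_def pin_factor_def domIff intro!: prod.neutral)
next
  case False
  then obtain l where "l \<in> dom c" "c l \<noteq> Some (w l)" by (auto simp: agrees_def)
  then have "l \<in> {1..n}" "pin_factor c l (w l) = 0" using assms by (auto simp: pin_factor_def)
  then show ?thesis using False by (auto intro: prod_zero)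
qed

lemma path_prob_eq_forward:
  assumes "1 \<le> n" "dom c \<subseteq> {1..n}" "0 \<le> p"
  shows "path_prob p n c = forward p (pin_factor c) n True + forward p (pin_factor c) n False"
proof -
  let ?G = "\<lambda>w. path_weight p n w * (\<Prod>l\<in>{1..n}. pin_factor c l (w l))"
  have "path_prob p n c = (\<Sum>w\<in>outcomes n. (if w n = True then ?G w else 0) + (if w n = False then ?G w else 0))"
    unfolding path_prob_def prod_pin_factor[OF assms(2)] by (intro sum.cong refl) auto
  then show ?thesis
    by (simp only: sum.distrib sum_path_weight_prod_eq_forward[OF assms(1,3)])
qed

lemma forward_pinned_True:
  assumes "c j = Some True" "0 < j"
  shows "forward p (pin_factor c) j True = p * forward p (pin_factor c) (j - 1) False"
    and "forward p (pin_factor c) j False = 0"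
  using assms forward_Suc_True[of p _ "j - 1"] forward_Suc_False[of p _ "j - 1"]
  by (simp_all add: pin_factor_def)

lemma forward_pinned_False:
  assumes "c j = Some False" "0 < j"
  shows "forward p (pin_factor c) j True = 0"
    and "forward p (pin_factor c) j False
      = forward p (pin_factor c) (j - 1) True + (1 - p) * forward p (pin_factor c) (j - 1) False"
  using assms forward_Suc_True[of p _ "j - 1"] forward_Suc_False[of p _ "j - 1"]
  by (simp_all add: pin_factor_def)

lemma forward_relax_unpinned:
  assumes "a \<le> b" "\<And>j. a < j \<Longrightarrow> j \<le> b \<Longrightarrow> c j = None" "0 \<le> p"
  defines "S \<equiv> forward p (pin_factor c) a True + forward p (pin_factor c) a False"
  defines "d \<equiv> forward p (pin_factor c) a True - S * stationary_prob p"
  shows "forward p (pin_factor c) b True = S * stationary_prob p + (-p) ^ (b - a) * d"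
    and "forward p (pin_factor c) b False = S * (1 - stationary_prob p) - (-p) ^ (b - a) * d"
  using forward_relax[of a b "pin_factor c" p] assms by (simp_all add: pin_factor_def fun_eq_iff)

lemma forward_total_unpinned:
  assumes "a \<le> b" "\<And>j. a < j \<Longrightarrow> j \<le> b \<Longrightarrow> c j = None" "0 \<le> p"
  shows "forward p (pin_factor c) b True + forward p (pin_factor c) b False
    = forward p (pin_factor c) a True + forward p (pin_factor c) a False"
  using forward_relax_unpinned[of a b c p, OF assms] by (simp add: algebra_simps)

lemma forward_unpinned_prefix:
  assumes "\<And>j. 0 < j \<Longrightarrow> j \<le> a \<Longrightarrow> c j = None" "0 \<le> p"
  shows "forward p (pin_factor c) a True = stationary_prob p"
    and "forward p (pin_factor c) a False = 1 - stationary_prob p"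
proof -
  have "init_prob p True = stationary_prob p" "init_prob p False = 1 - stationary_prob p"
    using assms(2) by (simp_all add: init_prob_def stationary_prob_def field_simps)
  then show "forward p (pin_factor c) a True = stationary_prob p"
    and "forward p (pin_factor c) a False = 1 - stationary_prob p"
    using forward_relax_unpinned[of 0 a c p] assms by simp_all
qed

lemma path_prob_single:
  assumes "1 \<le> i" "i \<le> n" "0 \<le> p"
  shows "path_prob p n [i \<mapsto> True] = stationary_prob p"
proof -
  let ?f = "forward p (pin_factor [i \<mapsto> True])"
  have "?f (i - 1) False = 1 - stationary_prob p"
    by (rule forward_unpinned_prefix) (use assms in auto)
  then have "?f i True = stationary_prob p" "?f i False = 0"
    using forward_pinned_True[of "[i \<mapsto> True]" i p] stationary_prob_balance[OF assms(3)] assms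
    by simp_all
  moreover have "path_prob p n [i \<mapsto> True] = ?f i True + ?f i False"
    using path_prob_eq_forward[of n "[i \<mapsto> True]" p] forward_total_unpinned[of i n "[i \<mapsto> True]" p] assms
    by simp
  ultimately show ?thesis by simp
qed

lemma path_prob_pair:
  assumes "1 \<le> i" "i < j" "j \<le> n" "0 \<le> p"
  shows "path_prob p n [i \<mapsto> True, j \<mapsto> True]
    = stationary_prob p ^ 2 + stationary_prob p * (1 - stationary_prob p) * (-p) ^ (j - i)"
proof -
  let ?c = "[i \<mapsto> True, j \<mapsto> True]"
  let ?f = "forward p (pin_factor ?c)"
  define q where "q = stationary_prob p"
  define E where "E = (-p) ^ (j - 1 - i)"
  have "?f (i - 1) False = 1 - q"
    unfolding q_def by (rule forward_unpinned_prefix) (use assms in auto)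
  then have "?f i True = q" "?f i False = 0"
    using forward_pinned_True[of ?c i p] stationary_prob_balance[OF assms(4)] assms
    by (simp_all add: q_def)
  then have "?f (j - 1) False = q * (1 - q) - E * (q - q * q)"
    using forward_relax_unpinned(2)[of i "j - 1" ?c p] assms by (simp add: q_def E_def)
  then have "?f j True = p * (q * (1 - q) - E * (q - q * q))" "?f j False = 0"
    using forward_pinned_True[of ?c j p] assms by simp_all
  moreover have "path_prob p n ?c = ?f j True + ?f j False"
    using path_prob_eq_forward[of n ?c p] forward_total_unpinned[of j n ?c p] assms by simp
  ultimately have "path_prob p n ?c = p * (q * (1 - q) - E * (q - q * q))" by simp
  also have "\<dots> = q ^ 2 + q * (1 - q) * (- p * E)"
  proof -
    obtain s where "s \<noteq> 0" and p: "p = (1 - s) / s" and q: "q = 1 - s"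
      using stationary_prob_param[OF assms(4)] unfolding q_def by blast
    show ?thesis using \<open>s \<noteq> 0\<close> by (simp add: p q field_simps power2_eq_square)
  qed
  also have "- p * E = (-p) ^ (j - i)"
    using assms by (simp flip: power_Suc add: E_def Suc_diff_Suc)
  finally show ?thesis unfolding q_def .
qed

lemma forward_first_pinned_False:
  assumes "c 1 = Some False" "0 \<le> p"
  shows "forward p (pin_factor c) 1 True = 0"
    and "forward p (pin_factor c) 1 False = 1 - stationary_prob p"
proof -
  have "forward p (pin_factor c) 1 False = stationary_prob p + (1 - p) * (1 - stationary_prob p)"
    using forward_pinned_False(2)[of c 1 p] forward_unpinned_prefix[of 0 c p] assms by simp
  also have "\<dots> = 1 - stationary_prob p"
    using stationary_prob_balance[OF assms(2)] by (simp add: algebra_simps)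
  finally show "forward p (pin_factor c) 1 False = 1 - stationary_prob p" .
  show "forward p (pin_factor c) 1 True = 0"
    using forward_pinned_False(1)[of c 1 p] assms by simp
qed

lemma path_prob_ends_off:
  assumes "2 \<le> n" "0 \<le> p"
  shows "path_prob p n [1 \<mapsto> False, n \<mapsto> False]
    = (1 - stationary_prob p) ^ 2 - stationary_prob p ^ 2 * (-p) ^ (n - 2)"
proof -
  let ?c = "[1 \<mapsto> False, n \<mapsto> False]"
  let ?f = "forward p (pin_factor ?c)"
  define q where "q = stationary_prob p"
  define E where "E = (-p) ^ (n - 2)"
  have "?f 1 True = 0" "?f 1 False = 1 - q"
    using forward_first_pinned_False[of ?c p] assms by (simp_all add: q_def)
  moreover have "?c l = None" if "1 < l" "l \<le> n - 1" for l
    using that by simp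
  ultimately have "?f (n - 1) True = (1 - q) * q + E * (0 - (1 - q) * q)"
    and "?f (n - 1) False = (1 - q) * (1 - q) - E * (0 - (1 - q) * q)"
    using forward_relax_unpinned[of 1 "n - 1" ?c p] assms by (simp_all add: q_def E_def numeral_2_eq_2)
  moreover have "path_prob p n ?c = ?f (n - 1) True + (1 - p) * ?f (n - 1) False"
    using path_prob_eq_forward[of n ?c p] forward_pinned_False[of ?c n p] assms by simp
  ultimately have "path_prob p n ?c
      = (1 - q) * q + E * (0 - (1 - q) * q) + (1 - p) * ((1 - q) * (1 - q) - E * (0 - (1 - q) * q))"
    by simp
  also have "\<dots> = (1 - q) ^ 2 - q ^ 2 * E"
  proof -
    obtain s where "s \<noteq> 0" and p: "p = (1 - s) / s" and q: "q = 1 - s"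
      using stationary_prob_param[OF assms(2)] unfolding q_def by blast
    show ?thesis using \<open>s \<noteq> 0\<close> by (simp add: p q field_simps power2_eq_square)
  qed
  finally show ?thesis unfolding q_def E_def .
qed

lemma path_prob_ends_off_mid_on:
  assumes "1 < j" "j < n" "0 \<le> p"
  shows "path_prob p n [1 \<mapsto> False, j \<mapsto> True, n \<mapsto> False]
    = stationary_prob p * (1 - stationary_prob p) ^ 2 * (1 - (-p) ^ (j - 1)) * (1 - (-p) ^ (n - j))"
proof -
  let ?c = "[1 \<mapsto> False, j \<mapsto> True, n \<mapsto> False]"
  let ?f = "forward p (pin_factor ?c)"
  define q where "q = stationary_prob p"
  define E1 where "E1 = (-p) ^ (j - 2)"
  define E2 where "E2 = (-p) ^ (n - 1 - j)"
  define T where "T = ?f j True"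
  have "?f 1 True = 0" "?f 1 False = 1 - q"
    using forward_first_pinned_False[of ?c p] assms by (simp_all add: q_def)
  moreover have "?c l = None" if "1 < l" "l \<le> j - 1" for l
    using that assms by auto
  ultimately have "?f (j - 1) False = (1 - q) * (1 - q) - E1 * (0 - (1 - q) * q)"
    using forward_relax_unpinned(2)[of 1 "j - 1" ?c p] assms by (simp add: q_def E1_def numeral_2_eq_2)
  then have T: "T = p * ((1 - q) * (1 - q) - E1 * (0 - (1 - q) * q))" and "?f j False = 0"
    using forward_pinned_True[of ?c j p] assms by (simp_all add: T_def)
  moreover have "?c l = None" if "j < l" "l \<le> n - 1" for l
    using that assms by auto
  ultimately have "?f (n - 1) True = T * q + E2 * (T - T * q)"
    and "?f (n - 1) False = T * (1 - q) - E2 * (T - T * q)"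
    using forward_relax_unpinned[of j "n - 1" ?c p] assms by (simp_all add: q_def E2_def T_def)
  moreover have "path_prob p n ?c = ?f (n - 1) True + (1 - p) * ?f (n - 1) False"
    using path_prob_eq_forward[of n ?c p] forward_pinned_False[of ?c n p] assms by simp
  ultimately have "path_prob p n ?c = T * q + E2 * (T - T * q) + (1 - p) * (T * (1 - q) - E2 * (T - T * q))"
    by simp
  also have "\<dots> = q * (1 - q) ^ 2 * (1 - (- p * E1)) * (1 - (- p * E2))"
  proof -
    obtain s where "s \<noteq> 0" and p: "p = (1 - s) / s" and q: "q = 1 - s"
      using stationary_prob_param[OF assms(3)] unfolding q_def by blast
    show ?thesis using \<open>s \<noteq> 0\<close> by (simp add: T p q field_simps power2_eq_square)
  qed
  moreover have "(-p) ^ (j - 1) = - p * E1" "(-p) ^ (n - j) = - p * E2"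
    using assms by (simp_all flip: power_Suc add: E1_def E2_def Suc_diff_Suc numeral_2_eq_2)
  ultimately show ?thesis unfolding q_def by simp
qed

section \<open>The variance as a quadratic form\<close>

lemma variance_under_linear_comb:
  assumes "finite J"
  shows "variance_under P k (\<lambda>w. \<Sum>j\<in>J. c j * X j w) =
    (\<Sum>i\<in>J. \<Sum>j\<in>J. c i * c j * ((\<Sum>w\<in>outcomes k. P w * (X i w * X j w))
        - (\<Sum>w\<in>outcomes k. P w * X i w) * (\<Sum>w\<in>outcomes k. P w * X j w)))"
proof -
  have second_moment: "(\<Sum>w\<in>outcomes k. P w * (\<Sum>j\<in>J. c j * X j w)\<^sup>2)
     = (\<Sum>i\<in>J. \<Sum>j\<in>J. c i * c j * (\<Sum>w\<in>outcomes k. P w * (X i w * X j w)))"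
  proof -
    have "(\<Sum>w\<in>outcomes k. P w * (\<Sum>j\<in>J. c j * X j w)\<^sup>2)
       = (\<Sum>w\<in>outcomes k. \<Sum>i\<in>J. \<Sum>j\<in>J. c i * c j * (P w * (X i w * X j w)))"
      by (intro sum.cong refl) (simp add: power2_eq_square sum_product sum_distrib_left mult_ac)
    also have "\<dots> = (\<Sum>i\<in>J. \<Sum>j\<in>J. c i * c j * (\<Sum>w\<in>outcomes k. P w * (X i w * X j w)))"
      by (simp add: sum.swap[of _ "outcomes k"] sum.swap[of _ "outcomes k" J] sum_distrib_left)
    finally show ?thesis .
  qed
  have mean: "(\<Sum>w\<in>outcomes k. P w * (\<Sum>j\<in>J. c j * X j w))
      = (\<Sum>j\<in>J. c j * (\<Sum>w\<in>outcomes k. P w * X j w))"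
    by (simp add: sum_distrib_left sum_distrib_right sum.swap[of _ "outcomes k"] mult_ac)
  show ?thesis
    unfolding variance_under_def second_moment mean
    by (simp add: power2_eq_square sum_product right_diff_distrib sum_subtractf mult_ac)
qed

definition joint_marg :: "((nat \<Rightarrow> bool) \<Rightarrow> real) \<Rightarrow> nat \<Rightarrow> nat \<Rightarrow> nat \<Rightarrow> real" where
  "joint_marg P k i j = (\<Sum>w\<in>outcomes k. if w i \<and> w j then P w else 0)"

definition ht_kernel :: "((nat \<Rightarrow> bool) \<Rightarrow> real) \<Rightarrow> nat \<Rightarrow> bool \<Rightarrow> nat \<Rightarrow> nat \<Rightarrow> real" where
  "ht_kernel P k first_t i j = edge_sign first_t i * edge_sign first_t j
     * (joint_marg P k i j - marg P k i * marg P k j) / (marg P k i * marg P k j)"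

lemma ht_kernel_commute: "ht_kernel P k first_t i j = ht_kernel P k first_t j i"
  unfolding ht_kernel_def joint_marg_def by (simp add: mult_ac conj_commute)

lemma variance_est_eq_kernel_form:
  "variance_under P k (est P k first_t Y)
    = (\<Sum>i\<in>{1..k}. \<Sum>j\<in>{1..k}. Y i * Y j * ht_kernel P k first_t i j)"
proof -
  let ?X = "\<lambda>j w. if w j then 1 else (0::real)"
  let ?c = "\<lambda>j. edge_sign first_t j * Y j / marg P k j"
  have est: "est P k first_t Y = (\<lambda>w. \<Sum>j\<in>{1..k}. ?c j * ?X j w)"
    unfolding est_def by (intro ext sum.cong) auto
  have marg: "(\<Sum>w\<in>outcomes k. P w * ?X j w) = marg P k j" for j
    unfolding marg_def by (intro sum.cong) auto
  have joint: "(\<Sum>w\<in>outcomes k. P w * (?X i w * ?X j w)) = joint_marg P k i j" for i j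
    unfolding joint_marg_def by (intro sum.cong) auto
  show ?thesis
    unfolding est variance_under_linear_comb[OF finite_atLeastAtMost] marg joint ht_kernel_def
    by (intro sum.cong refl) (simp add: ac_simps)
qed

lemma variance_est_max_on_box:
  assumes "\<And>i j. i \<in> {1..k} \<Longrightarrow> j \<in> {1..k} \<Longrightarrow> 0 \<le> ht_kernel P k first_t i j" "0 \<le> B"
  defines "F \<equiv> B\<^sup>2 * (\<Sum>i\<in>{1..k}. \<Sum>j\<in>{1..k}. ht_kernel P k first_t i j)"
  shows "(\<exists>Y\<in>outcome_box k B. variance_under P k (est P k first_t Y) = F)
    \<and> (\<forall>Y\<in>outcome_box k B. variance_under P k (est P k first_t Y) \<le> F)"
proof
  have "(\<lambda>_. B) \<in> outcome_box k B" "variance_under P k (est P k first_t (\<lambda>_. B)) = F"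
    using assms(2) by (simp_all add: outcome_box_def variance_est_eq_kernel_form F_def
        sum_distrib_left power2_eq_square mult.assoc)
  then show "\<exists>Y\<in>outcome_box k B. variance_under P k (est P k first_t Y) = F" by blast
  show "\<forall>Y\<in>outcome_box k B. variance_under P k (est P k first_t Y) \<le> F"
  proof
    fix Y assume Y: "Y \<in> outcome_box k B"
    have "Y i * Y j * ht_kernel P k first_t i j \<le> B * B * ht_kernel P k first_t i j"
      if "i \<in> {1..k}" "j \<in> {1..k}" for i j
      using that Y assms(1)[OF that] by (intro mult_right_mono mult_mono) (auto simp: outcome_box_def)
    then have "(\<Sum>i\<in>{1..k}. \<Sum>j\<in>{1..k}. Y i * Y j * ht_kernel P k first_t i j)
        \<le> (\<Sum>i\<in>{1..k}. \<Sum>j\<in>{1..k}. B * B * ht_kernel P k first_t i j)"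
      by (intro sum_mono) auto
    then show "variance_under P k (est P k first_t Y) \<le> F"
      by (simp add: variance_est_eq_kernel_form F_def sum_distrib_left power2_eq_square mult.assoc)
  qed
qed

section \<open>Paths\<close>

definition nat_dist :: "nat \<Rightarrow> nat \<Rightarrow> nat" where
  "nat_dist i j = (if i \<le> j then j - i else i - j)"

lemma edge_sign_mult: "edge_sign first_t i * edge_sign first_t j = (-1) ^ (i + j)"
proof -
  have "edge_sign first_t i = (if first_t then -1 else 1) * (-1) ^ i" for i
    unfolding edge_sign_def by (cases first_t; cases "even i") auto
  then show ?thesis by (simp add: power_add)
qed

lemma edge_sign_mult_neg_power_nat_dist:
  "edge_sign first_t i * edge_sign first_t j * (-p) ^ nat_dist i j = (p :: real) ^ nat_dist i j"
proof -
  have "i + j = nat_dist i j + 2 * min i j" unfolding nat_dist_def by auto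
  then have "(-1 :: real) ^ (i + j) = (-1) ^ nat_dist i j" by (simp add: power_add power_mult)
  then show ?thesis
    unfolding edge_sign_mult power_minus'[of p] by (simp flip: mult.assoc power_mult_distrib)
qed

lemma marg_path_weight: "marg (path_weight p n) n j = path_prob p n [j \<mapsto> True]"
  unfolding marg_def path_prob_def agrees_def by (intro sum.cong) auto

lemma joint_marg_path_weight: "joint_marg (path_weight p n) n i j = path_prob p n [i \<mapsto> True, j \<mapsto> True]"
  unfolding joint_marg_def path_prob_def agrees_def by (intro sum.cong) auto

lemma path_covariance:
  assumes "i \<in> {1..n}" "j \<in> {1..n}" "0 \<le> p"
  shows "path_prob p n [i \<mapsto> True, j \<mapsto> True] - stationary_prob p ^ 2
    = stationary_prob p * (1 - stationary_prob p) * (-p) ^ nat_dist i j"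
proof -
  consider "i = j" | "i < j" | "j < i" by linarith
  then show ?thesis
  proof cases
    case 1
    then show ?thesis using path_prob_single[of i n p] assms
      by (simp add: nat_dist_def power2_eq_square algebra_simps)
  next
    case 2
    then show ?thesis using path_prob_pair[of i j n p] assms by (simp add: nat_dist_def)
  next
    case 3
    then show ?thesis using path_prob_pair[of j i n p] assms by (simp add: nat_dist_def fun_upd_twist)
  qed
qed

lemma ht_kernel_path_weight:
  assumes "i \<in> {1..n}" "j \<in> {1..n}" "0 < p"
  shows "ht_kernel (path_weight p n) n first_t i j = p ^ nat_dist i j / p"
proof -
  let ?q = "stationary_prob p"
  let ?s = "edge_sign first_t i * edge_sign first_t j"
  have "?q \<noteq> 0" "(1 - ?q) / ?q = 1 / p"
    using assms(3) by (simp_all add: stationary_prob_def field_simps)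
  have "ht_kernel (path_weight p n) n first_t i j = ?s * (path_prob p n [i \<mapsto> True, j \<mapsto> True] - ?q ^ 2) / ?q ^ 2"
    using assms path_prob_single[of _ n p]
    by (simp add: ht_kernel_def marg_path_weight joint_marg_path_weight power2_eq_square)
  also have "\<dots> = ?s * (-p) ^ nat_dist i j * ((1 - ?q) / ?q)"
    unfolding path_covariance[OF assms(1,2) less_imp_le[OF assms(3)]]
    using \<open>?q \<noteq> 0\<close> by (simp add: power2_eq_square field_simps)
  finally have "ht_kernel (path_weight p n) n first_t i j = ?s * (-p) ^ nat_dist i j / p"
    unfolding \<open>(1 - ?q) / ?q = 1 / p\<close> by simp
  then show ?thesis unfolding edge_sign_mult_neg_power_nat_dist .
qed

lemma sum_atLeast1_power_pred: "(\<Sum>i\<in>{1..n}. x ^ (i - 1)) = (\<Sum>i<n. (x :: 'a :: comm_semiring_1) ^ i)"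
  by (simp add: sum.atLeast1_atMost_eq)

lemma sum_atLeast1_power_diff: "(\<Sum>i\<in>{1..n}. x ^ (n - i)) = (\<Sum>i<n. (x :: 'a :: comm_semiring_1) ^ i)"
  unfolding sum_atLeast1_power_pred[symmetric]
  using sum.atLeastAtMost_rev[of "\<lambda>i. x ^ (i - 1)" 1 n] by simp

lemma sum_square_atLeast1_Suc:
  "(\<Sum>i\<in>{1..Suc n}. \<Sum>j\<in>{1..Suc n}. f i j) = (\<Sum>i\<in>{1..n}. \<Sum>j\<in>{1..n}. f i j)
     + (\<Sum>i\<in>{1..n}. f i (Suc n)) + (\<Sum>j\<in>{1..n}. f (Suc n) j) + f (Suc n) (Suc n)"
  by (simp add: sum.distrib add_ac)

lemma sum_power_nat_dist:
  assumes "p \<noteq> (1 :: real)"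
  shows "(\<Sum>i\<in>{1..n}. \<Sum>j\<in>{1..n}. p ^ nat_dist i j)
    = real n + 2 * (real n * p * (1 - p) - p * (1 - p ^ n)) / (1 - p) ^ 2"
proof (induction n)
  case 0
  then show ?case by simp
next
  case (Suc n)
  have geom: "(\<Sum>i\<in>{1..n}. p ^ (n - i)) = (1 - p ^ n) / (1 - p)"
    unfolding sum_atLeast1_power_diff sum_gp_strict using assms by simp
  have "(\<Sum>i\<in>{1..n}. p ^ nat_dist i (Suc n)) = p * (\<Sum>i\<in>{1..n}. p ^ (n - i))"
    unfolding sum_distrib_left by (intro sum.cong refl) (simp add: nat_dist_def Suc_diff_le)
  then have column: "(\<Sum>i\<in>{1..n}. p ^ nat_dist i (Suc n)) = p * (1 - p ^ n) / (1 - p)"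
    unfolding geom by simp
  moreover have "(\<Sum>j\<in>{1..n}. p ^ nat_dist (Suc n) j) = (\<Sum>i\<in>{1..n}. p ^ nat_dist i (Suc n))"
    by (intro sum.cong refl) (simp add: nat_dist_def)
  moreover have "p ^ nat_dist (Suc n) (Suc n) = 1"
    by (simp add: nat_dist_def)
  ultimately have "(\<Sum>i\<in>{1..Suc n}. \<Sum>j\<in>{1..Suc n}. p ^ nat_dist i j)
      = real n + 2 * (real n * p * (1 - p) - p * (1 - p ^ n)) / (1 - p) ^ 2 + 2 * (p * (1 - p ^ n) / (1 - p)) + 1"
    unfolding sum_square_atLeast1_Suc Suc.IH by simp
  also have "\<dots> = real (Suc n) + 2 * (real (Suc n) * p * (1 - p) - p * (1 - p ^ Suc n)) / (1 - p) ^ 2"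
  proof -
    \<comment> \<open>with \<open>1 - p\<close> as an atom \<open>v\<close>, \<open>field_simps\<close> can clear the denominator \<open>v\<^sup>2\<close>\<close>
    obtain v where "v \<noteq> 0" and p: "p = 1 - v" using assms by (intro that[of "1 - p"]) simp_all
    show ?thesis using \<open>v \<noteq> 0\<close> by (simp add: p field_simps power2_eq_square)
  qed
  finally show ?case .
qed

lemma sum_ht_kernel_path_weight:
  assumes "0 < p" "p < 1"
  shows "(\<Sum>i\<in>{1..k}. \<Sum>j\<in>{1..k}. ht_kernel (path_weight p k) k first_t i j)
    = (1 / p + 2 / (1 - p)) * real k + 2 * (p ^ k - 1) / (1 - p)\<^sup>2"
proof -
  have "(\<Sum>i\<in>{1..k}. \<Sum>j\<in>{1..k}. ht_kernel (path_weight p k) k first_t i j)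
      = (\<Sum>i\<in>{1..k}. \<Sum>j\<in>{1..k}. p ^ nat_dist i j) / p"
    using ht_kernel_path_weight[OF _ _ assms(1)] by (simp flip: sum_divide_distrib)
  also have "\<dots> = (1 / p + 2 / (1 - p)) * real k + 2 * (p ^ k - 1) / (1 - p)\<^sup>2"
  proof -
    have "p \<noteq> 1" using assms by simp
    obtain v where "v \<noteq> 0" "1 - v \<noteq> 0" and p: "p = 1 - v"
      using assms by (intro that[of "1 - p"]) simp_all
    then show ?thesis
      unfolding sum_power_nat_dist[OF \<open>p \<noteq> 1\<close>] by (simp add: p field_simps power2_eq_square)
  qed
  finally show ?thesis .
qed

lemma path_var_max_on_box:
  fixes k :: nat
  assumes "0 < p" "p < 1" "0 \<le> B"
  defines "F \<equiv> (1 / p + 2 / (1 - p)) * B\<^sup>2 * real k + 2 * B\<^sup>2 * (p ^ k - 1) / (1 - p)\<^sup>2"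
  shows "(\<exists>Y\<in>outcome_box k B. path_var p k first_t Y = F)
    \<and> (\<forall>Y\<in>outcome_box k B. path_var p k first_t Y \<le> F)"
proof -
  have "F = B\<^sup>2 * (\<Sum>i\<in>{1..k}. \<Sum>j\<in>{1..k}. ht_kernel (path_weight p k) k first_t i j)"
    unfolding sum_ht_kernel_path_weight[OF assms(1,2)] F_def by (simp add: algebra_simps)
  moreover have "0 \<le> ht_kernel (path_weight p k) k first_t i j" if "i \<in> {1..k}" "j \<in> {1..k}" for i j
    using ht_kernel_path_weight[OF that assms(1)] assms(1) by simp
  ultimately show ?thesis
    using variance_est_max_on_box[of k "path_weight p k" first_t B] assms(3) unfolding path_var_def by simp
qed

section \<open>Cycles\<close>

definition close_cycle :: "nat \<Rightarrow> (nat \<Rightarrow> bool) \<Rightarrow> nat \<Rightarrow> bool" where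
  "close_cycle n w = w(Suc n := (\<not> w 1 \<and> \<not> w n))"

lemma sum_cycle_weight_eq_sum_path_weight:
  assumes "1 \<le> n"
  shows "(\<Sum>w\<in>outcomes (Suc n). cycle_weight p (Suc n) w * h w)
    = (\<Sum>w\<in>outcomes n. path_weight p n w * h (close_cycle n w))"
proof -
  have "cycle_weight p (Suc n) (w(Suc n := b))
      = path_weight p n w * (if b = (\<not> w 1 \<and> \<not> w n) then 1 else 0)" for w b
  proof -
    have "(\<Prod>j\<in>{2..n}. trans_prob p ((w(Suc n := b)) (j - 1)) ((w(Suc n := b)) j))
        = (\<Prod>j\<in>{2..n}. trans_prob p (w (j - 1)) (w j))"
      by (intro prod.cong) auto
    then show ?thesis using assms unfolding cycle_weight_def path_weight_def by auto
  qed
  then show ?thesis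
    unfolding sum_outcomes_Suc close_cycle_def by (intro sum.cong) auto
qed

lemma marg_cycle_weight:
  "1 \<le> n \<Longrightarrow> marg (cycle_weight p (Suc n)) (Suc n) j
    = (\<Sum>w\<in>outcomes n. if close_cycle n w j then path_weight p n w else 0)"
  using sum_cycle_weight_eq_sum_path_weight[of n p "\<lambda>w. if w j then 1 else 0"]
  unfolding marg_def by (simp add: if_distrib cong: if_cong)

lemma joint_marg_cycle_weight:
  "1 \<le> n \<Longrightarrow> joint_marg (cycle_weight p (Suc n)) (Suc n) i j
    = (\<Sum>w\<in>outcomes n. if close_cycle n w i \<and> close_cycle n w j then path_weight p n w else 0)"
  using sum_cycle_weight_eq_sum_path_weight[of n p "\<lambda>w. if w i \<and> w j then 1 else 0"]
  unfolding joint_marg_def by (simp add: if_distrib cong: if_cong)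

lemma marg_cycle_weight_edge:
  assumes "i \<in> {1..n}"
  shows "marg (cycle_weight p (Suc n)) (Suc n) i = marg (path_weight p n) n i"
proof -
  have "1 \<le> n" using assms by simp
  then show ?thesis
    unfolding marg_cycle_weight[OF \<open>1 \<le> n\<close>] using assms by (simp add: marg_def close_cycle_def)
qed

lemma joint_marg_cycle_weight_edges:
  assumes "i \<in> {1..n}" "j \<in> {1..n}"
  shows "joint_marg (cycle_weight p (Suc n)) (Suc n) i j = joint_marg (path_weight p n) n i j"
proof -
  have "1 \<le> n" using assms by simp
  then show ?thesis
    unfolding joint_marg_cycle_weight[OF \<open>1 \<le> n\<close>] using assms
    by (simp add: joint_marg_def close_cycle_def)
qed

lemma ht_kernel_cycle_weight_edges:
  assumes "i \<in> {1..n}" "j \<in> {1..n}"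
  shows "ht_kernel (cycle_weight p (Suc n)) (Suc n) first_t i j = ht_kernel (path_weight p n) n first_t i j"
  using assms by (simp add: ht_kernel_def marg_cycle_weight_edge joint_marg_cycle_weight_edges)

lemma marg_cycle_weight_closing:
  "1 \<le> n \<Longrightarrow> marg (cycle_weight p (Suc n)) (Suc n) (Suc n) = path_prob p n [1 \<mapsto> False, n \<mapsto> False]"
  unfolding marg_cycle_weight path_prob_def by (intro sum.cong) (auto simp: close_cycle_def agrees_def)

lemma marg_cycle_weight_closing_odd:
  assumes "odd n" "3 \<le> n" "0 \<le> p"
  shows "marg (cycle_weight p (Suc n)) (Suc n) (Suc n) = (1 - stationary_prob p) ^ 2 * (1 + p ^ n)"
proof -
  let ?q = "stationary_prob p"
  have "(-p) ^ (n - 2) = - (p ^ (n - 2))" using assms by (simp add: power_minus_odd)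
  moreover have "?q ^ 2 * p ^ (n - 2) = (1 - ?q) ^ 2 * p ^ n"
  proof -
    have "p ^ n = p ^ (2 + (n - 2))" using assms by (intro arg_cong[where f = "(^) p"]) simp
    also have "\<dots> = p ^ 2 * p ^ (n - 2)" by (rule power_add)
    finally have "p ^ n = p ^ 2 * p ^ (n - 2)" .
    moreover have "?q ^ 2 = (p * (1 - ?q)) ^ 2"
      by (simp only: stationary_prob_balance[OF assms(3)])
    ultimately show ?thesis by (simp add: power_mult_distrib)
  qed
  ultimately show ?thesis
    using assms path_prob_ends_off[of n p] by (simp add: marg_cycle_weight_closing algebra_simps)
qed

lemma joint_marg_cycle_weight_closing:
  assumes "i \<in> {1..n}" "2 \<le> n" "0 \<le> p"
  shows "joint_marg (cycle_weight p (Suc n)) (Suc n) i (Suc n)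
    = stationary_prob p * (1 - stationary_prob p) ^ 2 * (1 - (-p) ^ (i - 1)) * (1 - (-p) ^ (n - i))"
proof -
  have "1 \<le> n" using assms by simp
  then have "joint_marg (cycle_weight p (Suc n)) (Suc n) i (Suc n)
      = (\<Sum>w\<in>outcomes n. if w i \<and> \<not> w 1 \<and> \<not> w n then path_weight p n w else 0)"
    unfolding joint_marg_cycle_weight[OF \<open>1 \<le> n\<close>] using assms
    by (intro sum.cong) (auto simp: close_cycle_def)
  also have "\<dots> = stationary_prob p * (1 - stationary_prob p) ^ 2 * (1 - (-p) ^ (i - 1)) * (1 - (-p) ^ (n - i))"
  proof (cases "i = 1 \<or> i = n")
    case True
    then have "(if w i \<and> \<not> w 1 \<and> \<not> w n then path_weight p n w else 0) = 0" for w by auto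
    with True show ?thesis by auto
  next
    case False
    then have "(\<Sum>w\<in>outcomes n. if w i \<and> \<not> w 1 \<and> \<not> w n then path_weight p n w else 0)
        = path_prob p n [1 \<mapsto> False, i \<mapsto> True, n \<mapsto> False]"
      unfolding path_prob_def agrees_def by (intro sum.cong) auto
    then show ?thesis using False assms path_prob_ends_off_mid_on[of i n p] by simp
  qed
  finally show ?thesis .
qed

text \<open>\<open>(1 + p ^ n) * ht_kernel\<close> between edge \<open>i\<close> and the closing edge \<open>n + 1\<close> of a cycle with \<open>n\<close> odd.\<close>

definition cycle_closing_term :: "real \<Rightarrow> nat \<Rightarrow> nat \<Rightarrow> real" where
  "cycle_closing_term p n i = p ^ (i - 1) + p ^ (n - i) + (if even i then 1 else -1) * p ^ (n - 1) * (1 - p)"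

lemma cycle_closing_term_eq:
  assumes "odd n" "1 \<le> i" "i \<le> n"
  shows "(-1) ^ (i + Suc n) * ((1 - (-p) ^ (i - 1)) * (1 - (-p) ^ (n - i)) - (1 + p ^ n)) = cycle_closing_term p n i"
proof -
  have pn: "p ^ n = p * p ^ (n - 1)" using assms by (simp flip: power_Suc)
  have pm: "p ^ (i - 1) * p ^ (n - i) = p ^ (n - 1)" using assms by (simp flip: power_add)
  show ?thesis
  proof (cases "even i")
    case True
    then have "(-1) ^ (i + Suc n) = (1 :: real)" "(-p) ^ (i - 1) = - (p ^ (i - 1))" "(-p) ^ (n - i) = - (p ^ (n - i))"
      using assms by (simp_all add: power_minus_odd)
    then show ?thesis using True unfolding cycle_closing_term_def pn pm[symmetric] by (simp add: algebra_simps)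
  next
    case False
    then have "(-1) ^ (i + Suc n) = (-1 :: real)" "(-p) ^ (i - 1) = p ^ (i - 1)" "(-p) ^ (n - i) = p ^ (n - i)"
      using assms by (simp_all add: power_minus_even)
    then show ?thesis using False unfolding cycle_closing_term_def pn pm[symmetric] by (simp add: algebra_simps)
  qed
qed

lemma cycle_closing_term_nonneg:
  assumes "1 \<le> i" "i \<le> n" "0 \<le> p" "p \<le> 1"
  shows "0 \<le> cycle_closing_term p n i"
proof -
  have "p ^ (n - 1) \<le> p ^ (i - 1)" using assms by (intro power_decreasing) auto
  moreover have "0 \<le> p ^ (n - i)" "0 \<le> p ^ (n - 1) * p" "p ^ (n - 1) * p \<le> p ^ (n - 1)"
    using assms by (simp_all add: mult_left_le)
  ultimately show ?thesis unfolding cycle_closing_term_def by (simp add: algebra_simps)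
qed

lemma ht_kernel_cycle_weight_closing:
  assumes "i \<in> {1..n}" "odd n" "3 \<le> n" "0 < p"
  shows "ht_kernel (cycle_weight p (Suc n)) (Suc n) first_t i (Suc n) = cycle_closing_term p n i / (1 + p ^ n)"
proof -
  let ?q = "stationary_prob p"
  define X where "X = (1 - (-p) ^ (i - 1)) * (1 - (-p) ^ (n - i))"
  define W where "W = 1 + p ^ n"
  define a where "a = ?q * (1 - ?q) ^ 2"
  have "a \<noteq> 0" using assms by (simp add: a_def stationary_prob_def)
  have "0 < W" unfolding W_def using assms by (intro add_pos_nonneg) simp_all
  have "marg (cycle_weight p (Suc n)) (Suc n) i = ?q"
    using assms path_prob_single[of i n p] by (simp add: marg_cycle_weight_edge marg_path_weight)
  moreover have "marg (cycle_weight p (Suc n)) (Suc n) (Suc n) * ?q = a * W"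
    using assms by (simp add: marg_cycle_weight_closing_odd a_def W_def)
  moreover have "joint_marg (cycle_weight p (Suc n)) (Suc n) i (Suc n) = a * X"
    using assms joint_marg_cycle_weight_closing[of i n p] by (simp add: a_def X_def mult.assoc)
  ultimately have "ht_kernel (cycle_weight p (Suc n)) (Suc n) first_t i (Suc n)
      = (-1) ^ (i + Suc n) * (a * X - a * W) / (a * W)"
    unfolding ht_kernel_def edge_sign_mult by (simp add: mult.commute)
  also have "\<dots> = (-1) ^ (i + Suc n) * (X - W) / W"
    using \<open>a \<noteq> 0\<close> \<open>0 < W\<close> by (simp add: field_simps)
  also have "(-1) ^ (i + Suc n) * (X - W) = cycle_closing_term p n i"
    unfolding X_def W_def using assms by (intro cycle_closing_term_eq) auto
  finally show ?thesis unfolding W_def .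
qed

lemma ht_kernel_cycle_weight_closing_closing:
  assumes "odd n" "3 \<le> n" "0 < p"
  shows "ht_kernel (cycle_weight p (Suc n)) (Suc n) first_t (Suc n) (Suc n) = (1 + p) ^ 2 / (1 + p ^ n) - 1"
proof -
  let ?m = "marg (cycle_weight p (Suc n)) (Suc n) (Suc n)"
  have "0 < 1 + p ^ n" using assms by (intro add_pos_nonneg) simp_all
  have m: "?m = (1 + p ^ n) / (1 + p) ^ 2"
    using assms by (simp add: marg_cycle_weight_closing_odd one_minus_stationary_prob power_divide)
  then have "?m \<noteq> 0" using \<open>0 < 1 + p ^ n\<close> assms by simp
  have "ht_kernel (cycle_weight p (Suc n)) (Suc n) first_t (Suc n) (Suc n) = (?m - ?m * ?m) / (?m * ?m)"
    unfolding ht_kernel_def edge_sign_mult by (simp add: joint_marg_def marg_def)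
  also have "\<dots> = 1 / ?m - 1"
    using \<open>?m \<noteq> 0\<close> by (simp add: field_simps)
  finally show ?thesis unfolding m by simp
qed

lemma sum_alternating_sign: "(\<Sum>i\<in>{1..n :: nat}. if even i then 1 else -1 :: real) = (if even n then 0 else -1)"
  by (induction n) auto

lemma sum_cycle_closing_term:
  assumes "odd n" "p \<noteq> 1"
  shows "(\<Sum>i\<in>{1..n}. cycle_closing_term p n i) = 2 * (1 - p ^ n) / (1 - p) - p ^ (n - 1) * (1 - p)"
proof -
  have "(\<Sum>i\<in>{1..n}. cycle_closing_term p n i) = (\<Sum>i\<in>{1..n}. p ^ (i - 1)) + (\<Sum>i\<in>{1..n}. p ^ (n - i))
      + (\<Sum>i\<in>{1..n}. if even i then 1 else -1) * (p ^ (n - 1) * (1 - p))"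
    unfolding cycle_closing_term_def by (simp add: sum.distrib sum_distrib_right mult.assoc)
  also have "\<dots> = 2 * (1 - p ^ n) / (1 - p) - p ^ (n - 1) * (1 - p)"
    unfolding sum_atLeast1_power_pred sum_atLeast1_power_diff sum_gp_strict sum_alternating_sign
    using assms by simp
  finally show ?thesis .
qed

lemma sum_ht_kernel_cycle_weight:
  assumes "odd n" "3 \<le> n" "0 < p" "p < 1"
  shows "(\<Sum>i\<in>{1..Suc n}. \<Sum>j\<in>{1..Suc n}. ht_kernel (cycle_weight p (Suc n)) (Suc n) first_t i j)
    = (1 / p + 2 / (1 - p)) * real n + 2 * (p ^ n - 1) / (1 - p)\<^sup>2
      + (4 + 2 * p - p\<^sup>2 - p ^ 3 - p ^ (n - 1) * (2 + p + p\<^sup>2)) / ((1 - p) * (1 + p ^ n))"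
proof -
  let ?K = "ht_kernel (cycle_weight p (Suc n)) (Suc n) first_t"
  have "(\<Sum>i\<in>{1..n}. \<Sum>j\<in>{1..n}. ?K i j)
      = (\<Sum>i\<in>{1..n}. \<Sum>j\<in>{1..n}. ht_kernel (path_weight p n) n first_t i j)"
    by (intro sum.cong refl) (simp add: ht_kernel_cycle_weight_edges)
  moreover have "(\<Sum>i\<in>{1..n}. ?K i (Suc n)) = (\<Sum>i\<in>{1..n}. cycle_closing_term p n i) / (1 + p ^ n)"
    and "(\<Sum>j\<in>{1..n}. ?K (Suc n) j) = (\<Sum>i\<in>{1..n}. cycle_closing_term p n i) / (1 + p ^ n)"
    unfolding sum_divide_distrib using assms ht_kernel_cycle_weight_closing ht_kernel_commute
    by (auto intro!: sum.cong)
  ultimately have "(\<Sum>i\<in>{1..Suc n}. \<Sum>j\<in>{1..Suc n}. ?K i j)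
      = (1 / p + 2 / (1 - p)) * real n + 2 * (p ^ n - 1) / (1 - p)\<^sup>2
        + (2 * (\<Sum>i\<in>{1..n}. cycle_closing_term p n i) / (1 + p ^ n) + ((1 + p) ^ 2 / (1 + p ^ n) - 1))"
    unfolding sum_square_atLeast1_Suc ht_kernel_cycle_weight_closing_closing[OF assms(1-3)]
    using sum_ht_kernel_path_weight[OF assms(3,4), of n first_t] by simp
  also have "2 * (\<Sum>i\<in>{1..n}. cycle_closing_term p n i) / (1 + p ^ n) + ((1 + p) ^ 2 / (1 + p ^ n) - 1)
      = (4 + 2 * p - p\<^sup>2 - p ^ 3 - p ^ (n - 1) * (2 + p + p\<^sup>2)) / ((1 - p) * (1 + p ^ n))"
  proof -
    define x where "x = p ^ (n - 1)"
    define d1 where "d1 = 1 - p"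
    define d2 where "d2 = 1 + p * x"
    have "p ^ n = p * x" unfolding x_def using assms by (simp flip: power_Suc)
    have "d2 \<noteq> 0" unfolding d2_def x_def using assms by (intro add_pos_nonneg[THEN less_imp_neq, symmetric]) simp_all
    have "p \<noteq> 1" "d1 \<noteq> 0" using assms by (simp_all add: d1_def)
    then show ?thesis
      unfolding sum_cycle_closing_term[OF assms(1) \<open>p \<noteq> 1\<close>] x_def[symmetric] \<open>p ^ n = p * x\<close>
        d1_def[symmetric] d2_def[symmetric] using \<open>d2 \<noteq> 0\<close>
      by (simp add: field_simps) (simp add: d1_def d2_def algebra_simps power2_eq_square eval_nat_numeral)
  qed
  finally show ?thesis .
qed

lemma ht_kernel_cycle_weight_nonneg:
  assumes "i \<in> {1..Suc n}" "j \<in> {1..Suc n}" "odd n" "3 \<le> n" "0 < p" "p < 1"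
  shows "0 \<le> ht_kernel (cycle_weight p (Suc n)) (Suc n) first_t i j"
proof -
  have "0 < 1 + p ^ n" using assms by (intro add_pos_nonneg) simp_all
  have closing: "0 \<le> ht_kernel (cycle_weight p (Suc n)) (Suc n) first_t l (Suc n)" if "l \<in> {1..n}" for l
    using that assms \<open>0 < 1 + p ^ n\<close> cycle_closing_term_nonneg[of l n p]
    by (simp add: ht_kernel_cycle_weight_closing)
  have "p ^ n \<le> p" using power_decreasing[of 1 n p] assms by simp
  moreover have "0 \<le> p * p" "(1 + p) ^ 2 = 1 + 2 * p + p * p"
    by (simp_all add: power2_eq_square algebra_simps)
  ultimately have "1 + p ^ n \<le> (1 + p) ^ 2" using assms by linarith
  then have closing_closing: "0 \<le> ht_kernel (cycle_weight p (Suc n)) (Suc n) first_t (Suc n) (Suc n)"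
    using assms \<open>0 < 1 + p ^ n\<close> by (simp add: ht_kernel_cycle_weight_closing_closing)
  consider "i \<in> {1..n}" "j \<in> {1..n}" | "i \<in> {1..n}" "j = Suc n" | "i = Suc n" "j \<in> {1..n}"
    | "i = Suc n" "j = Suc n"
    using assms(1,2) by fastforce
  then show ?thesis
  proof cases
    case 1
    then show ?thesis using assms by (simp add: ht_kernel_cycle_weight_edges ht_kernel_path_weight)
  qed (use closing closing_closing ht_kernel_commute in auto)
qed

lemma cycle_var_max_on_box:
  assumes "0 < p" "p < 1" "0 \<le> B" "4 \<le> k" "even k"
  defines "F \<equiv> (1 / p + 2 / (1 - p)) * B\<^sup>2 * real (k - 1) + 2 * B\<^sup>2 * (p ^ (k - 1) - 1) / (1 - p)\<^sup>2
    + B\<^sup>2 * (4 + 2 * p - p\<^sup>2 - p ^ 3 - p ^ (k - 2) * (2 + p + p\<^sup>2)) / ((1 - p) * (1 + p ^ (k - 1)))"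
  shows "(\<exists>Y\<in>outcome_box k B. cycle_var p k first_t Y = F)
    \<and> (\<forall>Y\<in>outcome_box k B. cycle_var p k first_t Y \<le> F)"
proof -
  define n where "n = k - 1"
  have k: "k = Suc n" and n: "odd n" "3 \<le> n" "k - 2 = n - 1" using assms unfolding n_def by auto
  have "F = B\<^sup>2 * (\<Sum>i\<in>{1..k}. \<Sum>j\<in>{1..k}. ht_kernel (cycle_weight p k) k first_t i j)"
    unfolding k sum_ht_kernel_cycle_weight[OF n(1,2) assms(1,2)] F_def n_def[symmetric] n(3)
    by (simp add: algebra_simps)
  moreover have "0 \<le> ht_kernel (cycle_weight p k) k first_t i j" if "i \<in> {1..k}" "j \<in> {1..k}" for i j
    using ht_kernel_cycle_weight_nonneg[of i n j p first_t] that n assms(1,2) unfolding k by simp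
  ultimately show ?thesis
    using variance_est_max_on_box[of k "cycle_weight p k" first_t B] assms(3) unfolding cycle_var_def by simp
qed

section \<open>Maximal variance and its growth\<close>

lemma SUP_eq_attained_maximum:
  "(\<exists>x\<in>A. f x = (m :: real)) \<and> (\<forall>x\<in>A. f x \<le> m) \<Longrightarrow> (SUP x\<in>A. f x) = m"
  by (intro cSup_eq_maximum) auto

lemma LIMSEQ_ratio_linear_plus_convergent:
  fixes a g :: "nat \<Rightarrow> real"
  assumes "\<forall>\<^sub>F k in sequentially. a k = c * real k + g k" "g \<longlonglongrightarrow> L"
  shows "(\<lambda>k. a k / real k) \<longlonglongrightarrow> c"
proof -
  have "(\<lambda>k. g k / real k) \<longlonglongrightarrow> 0"
    using assms(2) filterlim_at_top_imp_at_infinity[OF filterlim_real_sequentially] by (rule tendsto_divide_0)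
  then have "(\<lambda>k. c + g k / real k) \<longlonglongrightarrow> c"
    using tendsto_add[OF tendsto_const] by fastforce
  moreover have "\<forall>\<^sub>F k in sequentially. c + g k / real k = a k / real k"
    using assms(1) eventually_gt_at_top[of 0] by eventually_elim (simp add: field_simps)
  ultimately show ?thesis by (rule Lim_transform_eventually)
qed

lemma LIMSEQ_power_minus_const_zero:
  assumes "\<bar>x :: real\<bar> < 1"
  shows "(\<lambda>k. x ^ (k - j)) \<longlonglongrightarrow> 0"
  using assms filterlim_compose[OF LIMSEQ_power_zero[of x] filterlim_minus_const_nat_at_top[of j]] by simp

lemma path_maxvar_limit:
  assumes "0 < p" "p < 1" "0 \<le> B"
  shows "(\<lambda>k. path_maxvar p B k first_t / real k) \<longlonglongrightarrow> (1 / p + 2 / (1 - p)) * B\<^sup>2"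
proof (rule LIMSEQ_ratio_linear_plus_convergent)
  show "\<forall>\<^sub>F k in sequentially. path_maxvar p B k first_t
      = (1 / p + 2 / (1 - p)) * B\<^sup>2 * real k + 2 * B\<^sup>2 * (p ^ k - 1) / (1 - p)\<^sup>2"
    unfolding path_maxvar_def using path_var_max_on_box[OF assms] by (simp add: SUP_eq_attained_maximum)
  show "(\<lambda>k. 2 * B\<^sup>2 * (p ^ k - 1) / (1 - p)\<^sup>2) \<longlonglongrightarrow> 2 * B\<^sup>2 * (0 - 1) / (1 - p)\<^sup>2"
  proof (intro tendsto_intros)
    show "(1 - p)\<^sup>2 \<noteq> 0" using assms by simp
  qed (use assms in simp)
qed

lemma cycle_maxvar_limit:
  assumes "0 < p" "p < 1" "0 \<le> B"
  shows "(\<lambda>m. cycle_maxvar p B (2 * m) first_t / real (2 * m)) \<longlonglongrightarrow> (1 / p + 2 / (1 - p)) * B\<^sup>2"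
proof -
  define c where "c = (1 / p + 2 / (1 - p)) * B\<^sup>2"
  define g where "g k = - c + 2 * B\<^sup>2 * (p ^ (k - 1) - 1) / (1 - p)\<^sup>2
    + B\<^sup>2 * (4 + 2 * p - p\<^sup>2 - p ^ 3 - p ^ (k - 2) * (2 + p + p\<^sup>2)) / ((1 - p) * (1 + p ^ (k - 1)))" for k
  have "g \<longlonglongrightarrow> - c + 2 * B\<^sup>2 * (0 - 1) / (1 - p)\<^sup>2
      + B\<^sup>2 * (4 + 2 * p - p\<^sup>2 - p ^ 3 - 0 * (2 + p + p\<^sup>2)) / ((1 - p) * (1 + 0))"
    unfolding g_def using assms by (intro tendsto_intros LIMSEQ_power_minus_const_zero) simp_all
  then have "(\<lambda>k. (c * real k + g k) / real k) \<longlonglongrightarrow> c"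
    by (intro LIMSEQ_ratio_linear_plus_convergent) simp_all
  then have "(\<lambda>m. (c * real (2 * m) + g (2 * m)) / real (2 * m)) \<longlonglongrightarrow> c"
    by (rule filterlim_compose) (simp add: filterlim_subseq strict_mono_def)
  moreover have "\<forall>\<^sub>F m in sequentially. (c * real (2 * m) + g (2 * m)) / real (2 * m)
      = cycle_maxvar p B (2 * m) first_t / real (2 * m)"
    using eventually_ge_at_top[of 2]
  proof eventually_elim
    case (elim m)
    then have "4 \<le> 2 * m" "even (2 * m)" "real (2 * m - 1) = real (2 * m) - 1" by auto
    then have "cycle_maxvar p B (2 * m) first_t = c * (real (2 * m) - 1) + (g (2 * m) + c)"
      unfolding cycle_maxvar_def g_def c_def
      by (subst SUP_eq_attained_maximum[OF cycle_var_max_on_box[OF assms]]) simp_all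
    then show ?case by (simp add: algebra_simps)
  qed
  ultimately show ?thesis unfolding c_def by (rule Lim_transform_eventually)
qed

theorem theorem2:
  fixes p B :: real
  assumes "0 < p" and "p < 1" and "0 < B"
  shows "(\<forall>k first_t. 1 \<le> k \<longrightarrow>
           (let F = (1 / p + 2 / (1 - p)) * B\<^sup>2 * real k + 2 * B\<^sup>2 * (p ^ k - 1) / (1 - p)\<^sup>2 in
             (\<exists>Y\<in>outcome_box k B. path_var p k first_t Y = F)
             \<and> (\<forall>Y\<in>outcome_box k B. path_var p k first_t Y \<le> F)))
    \<and> (\<forall>k first_t. 4 \<le> k \<and> even k \<longrightarrow>
           (let F = (1 / p + 2 / (1 - p)) * B\<^sup>2 * real (k - 1) + 2 * B\<^sup>2 * (p ^ (k - 1) - 1) / (1 - p)\<^sup>2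
                    + B\<^sup>2 * (4 + 2 * p - p\<^sup>2 - p ^ 3 - p ^ (k - 2) * (2 + p + p\<^sup>2))
                      / ((1 - p) * (1 + p ^ (k - 1))) in
             (\<exists>Y\<in>outcome_box k B. cycle_var p k first_t Y = F)
             \<and> (\<forall>Y\<in>outcome_box k B. cycle_var p k first_t Y \<le> F)))
    \<and> (\<forall>first_t. (\<lambda>k. path_maxvar p B k first_t / real k)
           \<longlonglongrightarrow> B\<^sup>2 * (1 + p) / (p * (1 - p)))
    \<and> (\<forall>first_t. (\<lambda>m. cycle_maxvar p B (2 * m) first_t / real (2 * m))
           \<longlonglongrightarrow> B\<^sup>2 * (1 + p) / (p * (1 - p)))"
proof -
  have "0 \<le> B" using assms(3) by simp
  have limit: "B\<^sup>2 * (1 + p) / (p * (1 - p)) = (1 / p + 2 / (1 - p)) * B\<^sup>2"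
    using assms(1,2) by (simp add: field_simps)
  show ?thesis
    unfolding Let_def limit
    using path_var_max_on_box[OF assms(1,2) \<open>0 \<le> B\<close>] cycle_var_max_on_box[OF assms(1,2) \<open>0 \<le> B\<close>]
      path_maxvar_limit[OF assms(1,2) \<open>0 \<le> B\<close>] cycle_maxvar_limit[OF assms(1,2) \<open>0 \<le> B\<close>]
    by blast
qed

end
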